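(* Let $D$ be an integral domain, $\mathcal{T}$ a finite multiset of elements of $D$, and $f=\prod_{r\in\mathcal{T}}(x-r)$ (with multiplicities). If $Q$ is a non-zero prime ideal of $D$, then $\mathsf{d}(f)\subseteq Q$ if and only if $\mathcal{T}$ contains a complete system of residues modulo $Q$. Furthermore, suppose $D$ is a Dedekind domain, $Q$ is a non-zero prime ideal of $D$, and $\mathcal{T}=\mathcal{T}_0\uplus\mathcal{T}_1\uplus\cdots\uplus\mathcal{T}_e$ (multiset disjoint union) such that: (1) for all $1\le i\le e$, $\mathcal{T}_i$ is a complete system of residues modulo $Q$, and the respective representatives of the same residue class modulo $Q$ in the different $\mathcal{T}_i$ are congruent to each other modulo $Q^2$; (2) there exists $z\in D$ such that $s\not\equiv z \pmod Q$ for all $s\in\mathcal{T}_0$. Then $\mathsf{v}_Q(\mathsf{d}(f))=e$.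
   Context: For a polynomial $g$ with $g(D)\subseteq D$, the fixed divisor $\mathsf{d}(g)$ is the ideal of $D$ generated by $\{g(a)\mid a\in D\}$. For a Dedekind domain $D$ and a maximal ideal $Q$, $\mathsf{v}_Q$ is the $Q$-adic valuation; for a non-zero ideal $I$, $\mathsf{v}_Q(I)=\min\{\mathsf{v}_Q(a)\mid a\in I\}$ (the exponent of $Q$ in the prime factorization of $I$). For multisets $S,T$, $S\uplus T$ is the multiset with multiplicities added. *)

theory Defs
  imports "HOL-Computational_Algebra.Polynomial" "HOL-Computational_Algebra.Fraction_Field"
          "HOL-Library.Multiset"
begin

definition is_ideal :: "'a::comm_ring_1 set \<Rightarrow> bool" where
  "is_ideal I \<longleftrightarrow> 0 \<in> I \<and> (\<forall>a\<in>I. \<forall>b\<in>I. a + b \<in> I) \<and> (\<forall>a\<in>I. \<forall>r. r * a \<in> I)"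

definition prime_ideal :: "'a::comm_ring_1 set \<Rightarrow> bool" where
  "prime_ideal P \<longleftrightarrow> is_ideal P \<and> P \<noteq> UNIV \<and> (\<forall>a b. a * b \<in> P \<longrightarrow> a \<in> P \<or> b \<in> P)"

definition maximal_ideal :: "'a::comm_ring_1 set \<Rightarrow> bool" where
  "maximal_ideal M \<longleftrightarrow> is_ideal M \<and> M \<noteq> UNIV \<and>
     (\<forall>J. is_ideal J \<and> M \<subseteq> J \<longrightarrow> J = M \<or> J = UNIV)"

definition ideal_span :: "'a::comm_ring_1 set \<Rightarrow> 'a set" where
  "ideal_span S = \<Inter>{I. is_ideal I \<and> S \<subseteq> I}"

definition ideal_prod :: "'a::comm_ring_1 set \<Rightarrow> 'a set \<Rightarrow> 'a set" where
  "ideal_prod I J = ideal_span {a * b | a b. a \<in> I \<and> b \<in> J}"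

primrec ideal_pow :: "'a::comm_ring_1 set \<Rightarrow> nat \<Rightarrow> 'a set" where
  "ideal_pow I 0 = UNIV"
| "ideal_pow I (Suc n) = ideal_prod I (ideal_pow I n)"

definition fixed_divisor :: "'a::comm_ring_1 poly \<Rightarrow> 'a set" where
  "fixed_divisor g = ideal_span (range (poly g))"

definition elem_val :: "'a::comm_ring_1 set \<Rightarrow> 'a \<Rightarrow> nat" where
  "elem_val Q a = (GREATEST n. a \<in> ideal_pow Q n)"

definition ideal_val :: "'a::comm_ring_1 set \<Rightarrow> 'a set \<Rightarrow> nat" where
  "ideal_val Q I = (LEAST n. \<exists>a\<in>I. a \<noteq> 0 \<and> elem_val Q a = n)"

definition contains_residue_system :: "'a::comm_ring_1 set \<Rightarrow> 'a multiset \<Rightarrow> bool" where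
  "contains_residue_system Q T \<longleftrightarrow> (\<forall>a. \<exists>t. t \<in># T \<and> a - t \<in> Q)"

definition complete_residue_system :: "'a::comm_ring_1 set \<Rightarrow> 'a multiset \<Rightarrow> bool" where
  "complete_residue_system Q T \<longleftrightarrow> (\<forall>a. size (filter_mset (\<lambda>t. a - t \<in> Q) T) = 1)"

definition noetherian :: "'a::comm_ring_1 itself \<Rightarrow> bool" where
  "noetherian _ \<longleftrightarrow> (\<forall>I::'a set. is_ideal I \<longrightarrow> (\<exists>F. finite F \<and> I = ideal_span F))"

definition integrally_closed :: "'a::idom itself \<Rightarrow> bool" where
  "integrally_closed _ \<longleftrightarrow>
     (\<forall>(x::'a fract) (p::'a poly). lead_coeff p = 1 \<and> poly (map_poly (\<lambda>a. Fract a 1) p) x = 0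
        \<longrightarrow> (\<exists>a. x = Fract a 1))"

definition dedekind_domain :: "'a::idom itself \<Rightarrow> bool" where
  "dedekind_domain T \<longleftrightarrow> noetherian T \<and> integrally_closed T \<and>
     (\<forall>P::'a set. prime_ideal P \<and> P \<noteq> {0} \<longrightarrow> maximal_ideal P)"

end

theory Submission
  imports Defs
begin

(*
  For a prime P the value f(c) = prod (c - r) lies in P iff some r is congruent to c modulo P,
  which is the first part.

  For the second part we work in the localization D_P without constructing it. A uniformizer p,
  with P D_P = p D_P, comes from the three Dedekind axioms: for 0 <> a in P, a maximal colon
  ideal (a D_P : b) is prime, hence equal to P; then either some q in P satisfies q b = a u with
  u a unit of D_P, and q is a uniformizer, or b/a maps P into itself, so it is integral and
  b lies in a D_P after all. Every value of f has a factor in P from each T_i, so d(f) lies in P^e.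
  At w = t + p, with t in T_1 congruent to z, no factor from T_0 lies in P and exactly one from
  each T_i does; by the P^2-congruences each of these is p times a unit of D_P, so f(w) is not
  in P^(e+1). Krull's intersection theorem (from noetherianity) keeps every valuation finite.
*)

lemma is_ideal_ideal_span: "is_ideal (ideal_span S)"
  unfolding ideal_span_def is_ideal_def by auto

lemma ideal_span_superset: "S \<subseteq> ideal_span S"
  unfolding ideal_span_def by auto

lemma ideal_span_least: "is_ideal I \<Longrightarrow> S \<subseteq> I \<Longrightarrow> ideal_span S \<subseteq> I"
  unfolding ideal_span_def by auto

lemma ideal_zero: "is_ideal I \<Longrightarrow> 0 \<in> I"
  unfolding is_ideal_def by auto

lemma ideal_add: "is_ideal I \<Longrightarrow> a \<in> I \<Longrightarrow> b \<in> I \<Longrightarrow> a + b \<in> I"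
  unfolding is_ideal_def by auto

lemma ideal_mult_left: "is_ideal I \<Longrightarrow> a \<in> I \<Longrightarrow> r * a \<in> I"
  unfolding is_ideal_def by auto

lemma ideal_mult_right: "is_ideal I \<Longrightarrow> a \<in> I \<Longrightarrow> a * r \<in> I"
  unfolding is_ideal_def by (metis mult.commute)

lemma ideal_diff: "is_ideal I \<Longrightarrow> a \<in> I \<Longrightarrow> b \<in> I \<Longrightarrow> a - b \<in> I"
  using ideal_add[of I a "(-1) * b"] ideal_mult_left[of I b "-1"] by simp

lemma ideal_diff_swap: "is_ideal I \<Longrightarrow> a - b \<in> I \<Longrightarrow> b - a \<in> I"
  using ideal_diff[of I 0 "a - b"] ideal_zero[of I] by simp

lemma prime_ideal_is_ideal: "prime_ideal P \<Longrightarrow> is_ideal P"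
  unfolding prime_ideal_def by blast

lemma prime_ideal_one_notin: "prime_ideal P \<Longrightarrow> 1 \<notin> P"
  unfolding prime_ideal_def using ideal_mult_left[of P 1] by (metis UNIV_eq_I mult.right_neutral)

lemma prime_ideal_mult_iff: "prime_ideal P \<Longrightarrow> a * b \<in> P \<longleftrightarrow> a \<in> P \<or> b \<in> P"
  unfolding prime_ideal_def using ideal_mult_left ideal_mult_right by blast

lemma prime_ideal_mult_notin: "prime_ideal P \<Longrightarrow> a \<notin> P \<Longrightarrow> b \<notin> P \<Longrightarrow> a * b \<notin> P"
  by (simp add: prime_ideal_mult_iff)

lemma prime_ideal_prod_notin:
  assumes "prime_ideal P"
  shows "finite A \<Longrightarrow> (\<forall>x\<in>A. f x \<notin> P) \<Longrightarrow> prod f A \<notin> P"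
  by (induction A rule: finite_induct)
    (auto simp: prime_ideal_one_notin[OF assms] prime_ideal_mult_notin[OF assms])

lemma prime_ideal_prod_mset_iff:
  assumes "prime_ideal P"
  shows "(\<Prod>x\<in>#M. f x) \<in> P \<longleftrightarrow> (\<exists>x\<in>#M. f x \<in> P)"
  by (induction M) (simp_all add: prime_ideal_one_notin[OF assms] prime_ideal_mult_iff[OF assms])

lemma is_ideal_ideal_pow: "is_ideal (ideal_pow I n)"
  by (cases n) (auto simp: ideal_prod_def is_ideal_ideal_span, simp add: is_ideal_def)

lemma ideal_pow_SucI: "a \<in> I \<Longrightarrow> b \<in> ideal_pow I n \<Longrightarrow> a * b \<in> ideal_pow I (Suc n)"
  unfolding ideal_pow.simps ideal_prod_def by (rule subsetD[OF ideal_span_superset]) blast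

lemma ideal_pow_Suc_subset: "is_ideal I \<Longrightarrow> ideal_pow I (Suc n) \<subseteq> ideal_pow I n"
  unfolding ideal_pow.simps ideal_prod_def
  by (rule ideal_span_least[OF is_ideal_ideal_pow]) (auto intro: ideal_mult_left[OF is_ideal_ideal_pow])

lemma ideal_pow_antimono:
  assumes "is_ideal I" and "m \<le> n"
  shows "ideal_pow I n \<subseteq> ideal_pow I m"
  using assms(2) by (induction n rule: dec_induct) (use ideal_pow_Suc_subset[OF assms(1)] in auto)

lemma prod_in_ideal_pow:
  "finite A \<Longrightarrow> (\<forall>x\<in>A. f x \<in> I) \<Longrightarrow> prod f A \<in> ideal_pow I (card A)"
  by (induction A rule: finite_induct) (auto simp del: ideal_pow.simps(2) intro: ideal_pow_SucI)

lemma finite_subset_Union_chain: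
  assumes "finite F" "F \<subseteq> \<Union>C" "C \<noteq> {}" "chain\<^sub>\<subseteq> C"
  shows "\<exists>X\<in>C. F \<subseteq> X"
  using assms(1,2)
proof (induction F rule: finite_induct)
  case empty
  then show ?case using assms(3) by auto
next
  case (insert x F)
  then obtain X Y where "X \<in> C" "F \<subseteq> X" "Y \<in> C" "x \<in> Y" by auto
  moreover have "X \<subseteq> Y \<or> Y \<subseteq> X" using assms(4) calculation unfolding chain_subset_def by blast
  ultimately show ?case by blast
qed

lemma is_ideal_Union_chain:
  assumes "C \<noteq> {}" "\<forall>A\<in>C. is_ideal A" "chain\<^sub>\<subseteq> C"
  shows "is_ideal (\<Union>C)"
  unfolding is_ideal_def
proof (intro conjI ballI allI)
  show "0 \<in> \<Union>C" using assms(1,2) ideal_zero by blast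
next
  fix a b assume "a \<in> \<Union>C" "b \<in> \<Union>C"
  then obtain A B where "A \<in> C" "B \<in> C" "a \<in> A" "b \<in> B" by auto
  moreover have "A \<subseteq> B \<or> B \<subseteq> A" using assms(3) calculation unfolding chain_subset_def by blast
  ultimately show "a + b \<in> \<Union>C" using assms(2) ideal_add by blast
next
  fix a r assume "a \<in> \<Union>C"
  then show "r * a \<in> \<Union>C" using assms(2) ideal_mult_left by blast
qed

lemma noetherian_maximal_element:
  assumes N: "noetherian TYPE('a::comm_ring_1)" and "S \<noteq> {}" and "\<forall>I\<in>S. is_ideal (I::'a set)"
  shows "\<exists>M\<in>S. \<forall>X\<in>S. M \<subseteq> X \<longrightarrow> X = M"
proof (rule Zorn_Lemma2, intro ballI)
  fix C assume C: "C \<in> chains S"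
  show "\<exists>U\<in>S. \<forall>X\<in>C. X \<subseteq> U"
  proof (cases "C = {}")
    case True
    then show ?thesis using assms(2) by auto
  next
    case False
    have CS: "C \<subseteq> S" and ch: "chain\<^sub>\<subseteq> C" using C unfolding chains_def by auto
    then have "is_ideal (\<Union>C)" using is_ideal_Union_chain[OF False] assms(3) by blast
    then obtain F where F: "finite F" "\<Union>C = ideal_span F" using N unfolding noetherian_def by blast
    moreover have "F \<subseteq> \<Union>C" using F(2) ideal_span_superset by blast
    ultimately obtain X where X: "X \<in> C" "F \<subseteq> X"
      using finite_subset_Union_chain[OF F(1) _ False ch] by blast
    then have "\<Union>C \<subseteq> X" using F(2) ideal_span_least[of X F] CS assms(3) by auto
    then show ?thesis using X CS by blast
  qed
qed

lemma noetherian_chain_stabilizes: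
  assumes "noetherian TYPE('a::comm_ring_1)" and "\<And>n. is_ideal (I n :: 'a set)"
    and "\<And>n. I n \<subseteq> I (Suc n)"
  shows "\<exists>K. I (Suc K) = I K"
proof -
  obtain K where "\<forall>X\<in>range I. I K \<subseteq> X \<longrightarrow> X = I K"
    using noetherian_maximal_element[OF assms(1), of "range I"] assms(2) by auto
  then show ?thesis using assms(3) by blast
qed

definition colon_ideal :: "'a::comm_ring_1 set \<Rightarrow> 'a \<Rightarrow> 'a set" where
  "colon_ideal J y = {r. r * y \<in> J}"

lemma is_ideal_colon_ideal: "is_ideal J \<Longrightarrow> is_ideal (colon_ideal J y)"
  unfolding is_ideal_def colon_ideal_def by (auto simp: distrib_right mult.assoc)

lemma maximal_colon_ideal_prime:
  assumes J: "is_ideal J" and b: "b \<notin> J"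
    and max: "\<And>y. y \<notin> J \<Longrightarrow> colon_ideal J b \<subseteq> colon_ideal J y \<Longrightarrow> colon_ideal J y = colon_ideal J b"
  shows "prime_ideal (colon_ideal J b)"
  unfolding prime_ideal_def
proof (intro conjI allI impI)
  show "is_ideal (colon_ideal J b)" using J by (rule is_ideal_colon_ideal)
  have "1 \<notin> colon_ideal J b" using b by (simp add: colon_ideal_def)
  then show "colon_ideal J b \<noteq> UNIV" by blast
next
  fix r1 r2 assume r12: "r1 * r2 \<in> colon_ideal J b"
  show "r1 \<in> colon_ideal J b \<or> r2 \<in> colon_ideal J b"
  proof (rule disjCI)
    assume "r2 \<notin> colon_ideal J b"
    then have "r2 * b \<notin> J" by (simp add: colon_ideal_def)
    moreover have "colon_ideal J b \<subseteq> colon_ideal J (r2 * b)"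
    proof
      fix r assume "r \<in> colon_ideal J b"
      then have "r2 * (r * b) \<in> J" using ideal_mult_left[OF J] by (simp add: colon_ideal_def)
      then show "r \<in> colon_ideal J (r2 * b)" by (simp add: colon_ideal_def mult.left_commute)
    qed
    ultimately have "colon_ideal J (r2 * b) = colon_ideal J b" by (rule max)
    moreover have "r1 \<in> colon_ideal J (r2 * b)" using r12 by (simp add: colon_ideal_def mult.assoc)
    ultimately show "r1 \<in> colon_ideal J b" by simp
  qed
qed

lemma is_ideal_image_mult:
  assumes I: "is_ideal I"
  shows "is_ideal ((*) a ` I)"
  unfolding is_ideal_def
proof (intro conjI ballI allI)
  show "0 \<in> (*) a ` I" using ideal_zero[OF I] by (metis image_eqI mult_zero_right)
next
  fix x y assume "x \<in> (*) a ` I" "y \<in> (*) a ` I"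
  then show "x + y \<in> (*) a ` I" using ideal_add[OF I] by (auto simp: distrib_left[symmetric])
next
  fix x r assume "x \<in> (*) a ` I"
  then show "r * x \<in> (*) a ` I" using ideal_mult_left[OF I] by (auto simp: mult.left_commute)
qed

text \<open>The contraction to \<open>D\<close> of the principal ideal \<open>a D\<^sub>P\<close> of the localization at \<open>P\<close>.\<close>
definition loc_principal :: "'a::comm_ring_1 set \<Rightarrow> 'a \<Rightarrow> 'a set" where
  "loc_principal P a = {x. \<exists>s d. s \<notin> P \<and> s * x = a * d}"

lemma is_ideal_loc_principal:
  assumes P: "prime_ideal P"
  shows "is_ideal (loc_principal P a)"
  unfolding is_ideal_def loc_principal_def
proof (intro conjI ballI allI; clarify?)
  show "\<exists>s d. s \<notin> P \<and> s * 0 = a * d"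
    using prime_ideal_one_notin[OF P] by (intro exI[of _ 1] exI[of _ 0]) simp
next
  fix x y s1 d1 s2 d2
  assume "s1 \<notin> P" "s1 * x = a * d1" "s2 \<notin> P" "s2 * y = a * d2"
  note eqs = this(2,4)
  have "s1 * s2 * (x + y) = s2 * (s1 * x) + s1 * (s2 * y)" by (simp add: algebra_simps)
  also have "\<dots> = a * (s2 * d1 + s1 * d2)" using eqs by (simp add: algebra_simps)
  finally show "\<exists>s d. s \<notin> P \<and> s * (x + y) = a * d"
    using prime_ideal_mult_notin[OF P \<open>s1 \<notin> P\<close> \<open>s2 \<notin> P\<close>] by blast
next
  fix x r s d
  assume "s \<notin> P" "s * x = a * d"
  then have "s * (r * x) = a * (r * d)" by (simp add: mult.left_commute)
  then show "\<exists>s d. s \<notin> P \<and> s * (r * x) = a * d" using \<open>s \<notin> P\<close> by blast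
qed

lemma loc_principal_multI: "prime_ideal P \<Longrightarrow> a * d \<in> loc_principal P a"
  unfolding loc_principal_def using prime_ideal_one_notin by fastforce

lemma loc_principal_cancel:
  assumes "prime_ideal P" "s \<notin> P" "s * x \<in> loc_principal P a"
  shows "x \<in> loc_principal P a"
proof -
  obtain t d where "t \<notin> P" "(t * s) * x = a * d"
    using assms(3) unfolding loc_principal_def by (auto simp: mult.assoc)
  then show ?thesis
    unfolding loc_principal_def using prime_ideal_mult_notin[OF assms(1) _ assms(2)] by blast
qed

lemma loc_principal_mult:
  assumes "prime_ideal P" "x \<in> loc_principal P a" "y \<in> loc_principal P b"
  shows "x * y \<in> loc_principal P (a * b)"
proof -
  obtain s d t c where "s \<notin> P" "s * x = a * d" "t \<notin> P" "t * y = b * c"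
    using assms(2,3) unfolding loc_principal_def by blast
  then have "s * t \<notin> P" "(s * t) * (x * y) = (a * b) * (d * c)"
    using prime_ideal_mult_notin[OF assms(1)] by (auto simp: algebra_simps)
  then show ?thesis unfolding loc_principal_def by blast
qed

text \<open>\<open>p\<close> generates the maximal ideal of the localization \<open>D\<^sub>P\<close>.\<close>
definition local_uniformizer :: "'a::comm_ring_1 set \<Rightarrow> 'a \<Rightarrow> bool" where
  "local_uniformizer P p \<longleftrightarrow> p \<in> P \<and> p \<noteq> 0 \<and> P \<subseteq> loc_principal P p"

lemma ideal_pow_subset_loc_principal:
  assumes P: "prime_ideal P" and p: "local_uniformizer P p"
  shows "ideal_pow P n \<subseteq> loc_principal P (p ^ n)"
proof (induction n)
  case 0
  show ?case using loc_principal_multI[OF P, of 1] by auto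
next
  case (Suc n)
  have "{a * b |a b. a \<in> P \<and> b \<in> ideal_pow P n} \<subseteq> loc_principal P (p * p ^ n)"
    using p Suc loc_principal_mult[OF P] unfolding local_uniformizer_def by blast
  then show ?case unfolding ideal_pow.simps ideal_prod_def power_Suc
    by (rule ideal_span_least[OF is_ideal_loc_principal[OF P]])
qed

lemma exists_not_in_ideal_pow:
  fixes x :: "'a::idom"
  assumes P: "prime_ideal P" and p: "local_uniformizer P p"
    and N: "noetherian TYPE('a)" and x: "x \<noteq> 0"
  shows "\<exists>n. x \<notin> ideal_pow P n"
proof (rule ccontr)
  assume "\<nexists>n. x \<notin> ideal_pow P n"
  then have x_loc: "x \<in> loc_principal P (p ^ n)" for n
    using ideal_pow_subset_loc_principal[OF P p] by blast
  define J where "J n = colon_ideal (loc_principal P x) (p ^ n)" for n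
  have "is_ideal (J n)" for n
    unfolding J_def by (intro is_ideal_colon_ideal is_ideal_loc_principal P)
  moreover have "J n \<subseteq> J (Suc n)" for n
  proof
    fix r assume "r \<in> J n"
    then have "p * (r * p ^ n) \<in> loc_principal P x"
      using ideal_mult_left[OF is_ideal_loc_principal[OF P]] by (simp add: J_def colon_ideal_def)
    then show "r \<in> J (Suc n)" by (simp add: J_def colon_ideal_def mult.left_commute)
  qed
  ultimately obtain K where K: "J (Suc K) = J K"
    using noetherian_chain_stabilizes[OF N] by blast
  obtain s d where s: "s \<notin> P" and sx: "s * x = p ^ Suc K * d"
    using x_loc[of "Suc K"] unfolding loc_principal_def by blast
  have "d * p ^ Suc K = x * s" using sx by (simp add: mult.commute)
  then have "d \<in> J (Suc K)" using loc_principal_multI[OF P, of x s] by (simp add: J_def colon_ideal_def)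
  then have "d \<in> J K" using K by simp
  then obtain t c where t: "t \<notin> P" and tc: "t * (d * p ^ K) = x * c"
    unfolding J_def colon_ideal_def loc_principal_def by blast
  have "(t * s) * x = p * (t * (d * p ^ K))" using sx by (simp add: algebra_simps)
  also have "\<dots> = (p * c) * x" using tc by (simp add: algebra_simps)
  finally have "t * s = p * c" using x by simp
  moreover have "p * c \<in> P"
    using p ideal_mult_right[OF prime_ideal_is_ideal[OF P]] unfolding local_uniformizer_def by blast
  ultimately show False using prime_ideal_mult_notin[OF P t s] by simp
qed

text \<open>\<open>x\<close> and \<open>y\<close> are associates in the localization \<open>D\<^sub>P\<close>.\<close>
definition loc_assoc :: "'a::comm_ring_1 set \<Rightarrow> 'a \<Rightarrow> 'a \<Rightarrow> bool" where
  "loc_assoc P x y \<longleftrightarrow> (\<exists>s u. s \<notin> P \<and> u \<notin> P \<and> s * x = y * u)"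

lemma loc_assoc_one: "prime_ideal P \<Longrightarrow> x \<notin> P \<Longrightarrow> loc_assoc P x 1"
  unfolding loc_assoc_def using prime_ideal_one_notin by fastforce

lemma loc_assoc_mult:
  assumes P: "prime_ideal P" and "loc_assoc P x y" "loc_assoc P x' y'"
  shows "loc_assoc P (x * x') (y * y')"
proof -
  obtain s u s' u' where su: "s \<notin> P" "u \<notin> P" "s' \<notin> P" "u' \<notin> P"
    and eq: "s * x = y * u" "s' * x' = y' * u'"
    using assms(2,3) unfolding loc_assoc_def by blast
  have "(s * s') * (x * x') = (s * x) * (s' * x')" by (simp add: ac_simps)
  also have "\<dots> = (y * y') * (u * u')" unfolding eq by (simp add: ac_simps)
  finally show ?thesis unfolding loc_assoc_def using su prime_ideal_mult_notin[OF P] by blast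
qed

lemma loc_assoc_prod_mset:
  assumes P: "prime_ideal P"
  shows "(\<forall>x\<in>#M. loc_assoc P (f x) (g x)) \<Longrightarrow> loc_assoc P (\<Prod>x\<in>#M. f x) (\<Prod>x\<in>#M. g x)"
proof (induction M)
  case empty
  show ?case using loc_assoc_one[OF P] prime_ideal_one_notin[OF P] by simp
next
  case (add x M)
  then show ?case using loc_assoc_mult[OF P] by simp
qed

lemma loc_assoc_power_not_in_ideal_pow:
  fixes x :: "'a::idom"
  assumes P: "prime_ideal P" and p: "local_uniformizer P p" and x: "loc_assoc P x (p ^ n)"
  shows "x \<notin> ideal_pow P (Suc n)"
proof
  assume "x \<in> ideal_pow P (Suc n)"
  then obtain t d where t: "t \<notin> P" and td: "t * x = p ^ Suc n * d"
    using ideal_pow_subset_loc_principal[OF P p] unfolding loc_principal_def by blast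
  obtain s u where s: "s \<notin> P" and u: "u \<notin> P" and su: "s * x = p ^ n * u"
    using x unfolding loc_assoc_def by blast
  have "p ^ n * (t * u) = t * (s * x)" using su by (simp add: algebra_simps)
  also have "\<dots> = p ^ n * (p * (s * d))" using td by (simp add: algebra_simps)
  finally have "t * u = p * (s * d)" using p unfolding local_uniformizer_def by simp
  moreover have "p * (s * d) \<in> P"
    using p ideal_mult_right[OF prime_ideal_is_ideal[OF P]] unfolding local_uniformizer_def by blast
  ultimately show False using prime_ideal_mult_notin[OF P t u] by simp
qed

lemma loc_assoc_uniformizer_add:
  assumes P: "prime_ideal P" and p: "local_uniformizer P p" and x: "x \<in> ideal_pow P 2"
  shows "loc_assoc P (p + x) p"
proof -
  have I: "is_ideal P" using P by (rule prime_ideal_is_ideal)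
  obtain s d where s: "s \<notin> P" and sd: "s * x = p\<^sup>2 * d"
    using x ideal_pow_subset_loc_principal[OF P p] unfolding loc_principal_def by blast
  have "s * (p + x) = p * (s + p * d)" using sd by (simp add: algebra_simps power2_eq_square)
  moreover have "s + p * d \<notin> P"
  proof
    assume "s + p * d \<in> P"
    moreover have "p * d \<in> P" using p ideal_mult_right[OF I] unfolding local_uniformizer_def by blast
    ultimately have "(s + p * d) - p * d \<in> P" by (rule ideal_diff[OF I])
    then show False using s by simp
  qed
  ultimately show ?thesis unfolding loc_assoc_def using s by blast
qed

lemma elem_val_eqI:
  assumes "is_ideal P" "x \<in> ideal_pow P n" "x \<notin> ideal_pow P (Suc n)"
  shows "elem_val P x = n"
  unfolding elem_val_def
proof (rule Greatest_equality)
  fix m assume "x \<in> ideal_pow P m"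
  then show "m \<le> n" using assms ideal_pow_antimono[of P "Suc n" m] by (cases "m \<le> n") auto
qed (use assms in auto)

lemma le_elem_val:
  fixes x :: "'a::idom"
  assumes "noetherian TYPE('a)" "prime_ideal P" "local_uniformizer P p"
    and "x \<noteq> 0" "x \<in> ideal_pow P n"
  shows "n \<le> elem_val P x"
proof -
  obtain M where M: "x \<notin> ideal_pow P M" using exists_not_in_ideal_pow assms(1-4) by blast
  have "m \<le> M" if "x \<in> ideal_pow P m" for m
    using M that ideal_pow_antimono[OF prime_ideal_is_ideal[OF assms(2)], of M m]
    by (cases "m \<le> M") auto
  then show ?thesis unfolding elem_val_def using assms(5) by (blast intro: Greatest_le_nat)
qed

lemma ideal_val_eqI:
  fixes I :: "'a::idom set"
  assumes "noetherian TYPE('a)" "prime_ideal P" "local_uniformizer P p"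
    and "I \<subseteq> ideal_pow P n" "a \<in> I" "a \<noteq> 0" "elem_val P a = n"
  shows "ideal_val P I = n"
  unfolding ideal_val_def
proof (rule Least_equality)
  show "\<exists>a\<in>I. a \<noteq> 0 \<and> elem_val P a = n" using assms(5-7) by blast
next
  fix m assume "\<exists>b\<in>I. b \<noteq> 0 \<and> elem_val P b = m"
  then show "n \<le> m" using le_elem_val[OF assms(1-3)] assms(4) by blast
qed

lemma Fract_if_monic_relation:
  fixes y :: "'a::idom fract"
  assumes IC: "integrally_closed TYPE('a)" and rel: "y ^ n = (\<Sum>k<n. Fract (c k) 1 * y ^ k)"
  shows "\<exists>a. y = Fract a 1"
proof -
  define q where "q = monom 1 n - (\<Sum>k<n. monom (c k) k)"
  have coeff_q: "coeff q i = (if i = n then 1 else 0) - (if i < n then c i else 0)" for i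
    unfolding q_def by (simp add: coeff_sum coeff_monom)
  have "degree q = n"
    by (rule antisym; (rule degree_le le_degree)?) (auto simp: coeff_q)
  then have "lead_coeff q = 1" using coeff_q by simp
  have "map_poly (\<lambda>a. Fract a 1) q = monom 1 n - (\<Sum>k<n. monom (Fract (c k) 1) k)"
    by (rule poly_eqI)
      (simp add: coeff_map_poly coeff_q coeff_sum coeff_monom Zero_fract_def One_fract_def)
  then have "poly (map_poly (\<lambda>a. Fract a 1) q) y = 0"
    using rel by (simp add: poly_sum poly_monom)
  then show ?thesis using IC \<open>lead_coeff q = 1\<close> unfolding integrally_closed_def by blast
qed

lemma Fract_if_common_denominator_powers:
  fixes y :: "'a::idom fract"
  assumes N: "noetherian TYPE('a)" and IC: "integrally_closed TYPE('a)"
    and g: "g \<noteq> 0" and pow: "\<And>k. \<exists>x. y ^ k * Fract g 1 = Fract x 1"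
  shows "\<exists>a. y = Fract a 1"
proof -
  define h :: "'a \<Rightarrow> 'a fract" where "h a = Fract a 1" for a
  have h_simps: "h 0 = 0" "h 1 = 1" "h (a + b) = h a + h b" "h (a * b) = h a * h b" for a b
    by (simp_all add: h_def Zero_fract_def One_fract_def)
  define I where "I n = {x. \<exists>c. h x = h g * (\<Sum>k<n. h (c k) * y ^ k)}" for n
  have "is_ideal (I n)" for n
    unfolding is_ideal_def
  proof (intro conjI ballI allI)
    show "0 \<in> I n" unfolding I_def by (intro CollectI exI[of _ "\<lambda>_. 0"]) (simp add: h_simps)
  next
    fix a b assume "a \<in> I n" "b \<in> I n"
    then obtain c1 c2 where
      "h a = h g * (\<Sum>k<n. h (c1 k) * y ^ k)" "h b = h g * (\<Sum>k<n. h (c2 k) * y ^ k)"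
      unfolding I_def by blast
    then have "h (a + b) = h g * (\<Sum>k<n. h (c1 k + c2 k) * y ^ k)"
      by (simp add: h_simps distrib_left distrib_right sum.distrib)
    then show "a + b \<in> I n" unfolding I_def by (intro CollectI exI[of _ "\<lambda>k. c1 k + c2 k"])
  next
    fix a r assume "a \<in> I n"
    then obtain c where "h a = h g * (\<Sum>k<n. h (c k) * y ^ k)" unfolding I_def by blast
    then have "h (r * a) = h g * (\<Sum>k<n. h (r * c k) * y ^ k)"
      by (simp add: h_simps sum_distrib_left algebra_simps)
    then show "r * a \<in> I n" unfolding I_def by (intro CollectI exI[of _ "\<lambda>k. r * c k"])
  qed
  moreover have "I n \<subseteq> I (Suc n)" for n
  proof
    fix x assume "x \<in> I n"
    then obtain c where "h x = h g * (\<Sum>k<n. h (c k) * y ^ k)" unfolding I_def by blast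
    then have "h x = h g * (\<Sum>k<Suc n. h ((c(n := 0)) k) * y ^ k)" by (simp add: h_simps)
    then show "x \<in> I (Suc n)" unfolding I_def by blast
  qed
  ultimately obtain K where K: "I (Suc K) = I K"
    using noetherian_chain_stabilizes[OF N] by blast
  obtain x where x: "y ^ K * h g = h x" using pow unfolding h_def by blast
  have "h x = h g * (\<Sum>k<Suc K. h (if k = K then 1 else 0) * y ^ k)"
    using x by (simp add: h_simps mult.commute)
  then have "x \<in> I (Suc K)" unfolding I_def by (intro CollectI exI[of _ "\<lambda>k. if k = K then 1 else 0"])
  then have "x \<in> I K" using K by simp
  then obtain c where "h x = h g * (\<Sum>k<K. h (c k) * y ^ k)" unfolding I_def by blast
  moreover have "h g \<noteq> 0" using g unfolding h_def Zero_fract_def by (simp add: eq_fract)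
  ultimately have "y ^ K = (\<Sum>k<K. Fract (c k) 1 * y ^ k)"
    using x by (simp add: h_def mult.commute)
  then show ?thesis by (rule Fract_if_monic_relation[OF IC])
qed

lemma finitely_generated_subset_colon_ideal:
  assumes P: "prime_ideal P" and J: "is_ideal J" and F: "finite F"
    and gen: "\<forall>g\<in>F. \<exists>s. s \<notin> P \<and> g \<in> colon_ideal J s"
  shows "\<exists>t. t \<notin> P \<and> ideal_span F \<subseteq> colon_ideal J t"
proof -
  obtain s where s: "\<forall>g\<in>F. s g \<notin> P \<and> g \<in> colon_ideal J (s g)" using gen by metis
  have "prod s F \<notin> P" using prime_ideal_prod_notin[OF P F] s by blast
  moreover have "F \<subseteq> colon_ideal J (prod s F)"
  proof
    fix g assume g: "g \<in> F"
    have "g * prod s F = (g * s g) * prod s (F - {g})"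
      using F g by (simp add: prod.remove mult.assoc)
    then show "g \<in> colon_ideal J (prod s F)"
      using s g ideal_mult_right[OF J] by (simp add: colon_ideal_def)
  qed
  ultimately show ?thesis using ideal_span_least[OF is_ideal_colon_ideal[OF J]] by blast
qed

text \<open>The fraction \<open>c / a\<close> maps \<open>P\<close> into itself, so it is integral over \<open>D\<close>.\<close>
lemma dvd_if_colon_ideal_image_mult:
  fixes a :: "'a::idom"
  assumes N: "noetherian TYPE('a)" and IC: "integrally_closed TYPE('a)"
    and a: "a \<in> P" "a \<noteq> 0" and stab: "P \<subseteq> colon_ideal ((*) a ` P) c"
  shows "a dvd c"
proof -
  define y where "y = Fract c a"
  have y_mult: "\<exists>q'\<in>P. y * Fract q 1 = Fract q' 1" if "q \<in> P" for q
  proof -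
    have "q * c \<in> (*) a ` P" using stab that by (auto simp: colon_ideal_def)
    then obtain q' where "q' \<in> P" "q * c = a * q'" by blast
    then show ?thesis using a(2) unfolding y_def by (auto simp: eq_fract mult.commute)
  qed
  have "\<exists>x\<in>P. y ^ k * Fract a 1 = Fract x 1" for k
  proof (induction k)
    case 0
    then show ?case using a(1) by auto
  next
    case (Suc k)
    then obtain x where "x \<in> P" "y ^ k * Fract a 1 = Fract x 1" by blast
    then show ?case using y_mult[of x] by (auto simp: mult.assoc)
  qed
  then obtain d where "y = Fract d 1"
    using Fract_if_common_denominator_powers[OF N IC a(2)] by blast
  then have "c = a * d" using a(2) unfolding y_def by (simp add: eq_fract mult.commute)
  then show ?thesis by simp
qed

lemma dedekind_exists_maximal_colon_ideal:
  fixes a :: "'a::idom"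
  assumes D: "dedekind_domain TYPE('a)" and P: "prime_ideal P" and a: "a \<in> P" "a \<noteq> 0"
  shows "\<exists>b. b \<notin> loc_principal P a \<and> colon_ideal (loc_principal P a) b = P"
proof -
  let ?L = "loc_principal P a"
  have N: "noetherian TYPE('a)"
    and max_ideal: "\<And>P'::'a set. prime_ideal P' \<Longrightarrow> P' \<noteq> {0} \<Longrightarrow> maximal_ideal P'"
    using D unfolding dedekind_domain_def by auto
  have L: "is_ideal ?L" using P by (rule is_ideal_loc_principal)
  have "1 \<notin> ?L"
  proof
    assume "1 \<in> ?L"
    then obtain s d where "s \<notin> P" "s * 1 = a * d" unfolding loc_principal_def by blast
    then show False using ideal_mult_right[OF prime_ideal_is_ideal[OF P] a(1)] by simp
  qed
  then obtain b where b: "b \<notin> ?L"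
    and max: "\<forall>X\<in>colon_ideal ?L ` (- ?L). colon_ideal ?L b \<subseteq> X \<longrightarrow> X = colon_ideal ?L b"
    using noetherian_maximal_element[OF N, of "colon_ideal ?L ` (- ?L)"] is_ideal_colon_ideal[OF L]
    by blast
  have prime: "prime_ideal (colon_ideal ?L b)"
    using max by (intro maximal_colon_ideal_prime[OF L b]) blast
  have "a \<in> colon_ideal ?L b"
    using loc_principal_multI[OF P] by (simp add: colon_ideal_def)
  then have "maximal_ideal (colon_ideal ?L b)" using max_ideal[OF prime] a(2) by blast
  moreover have "colon_ideal ?L b \<subseteq> P"
    using b loc_principal_cancel[OF P] by (auto simp: colon_ideal_def)
  ultimately have "colon_ideal ?L b = P"
    using P unfolding maximal_ideal_def prime_ideal_def by blast
  then show ?thesis using b by blast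
qed

lemma local_uniformizer_if_exact_quotient:
  assumes P: "prime_ideal P" and "a \<noteq> 0" "b \<noteq> 0"
    and Pb: "P \<subseteq> colon_ideal (loc_principal P a) b"
    and q0: "q0 \<in> P" and s0: "s0 \<notin> P" and d0: "d0 \<notin> P" and exact: "s0 * (q0 * b) = a * d0"
  shows "local_uniformizer P (q0 :: 'a::idom)"
  unfolding local_uniformizer_def
proof (intro conjI subsetI)
  show "q0 \<noteq> 0" using exact d0 ideal_zero[OF prime_ideal_is_ideal[OF P]] \<open>a \<noteq> 0\<close> by auto
next
  fix q assume "q \<in> P"
  then obtain s c where s: "s \<notin> P" and sc: "s * (q * b) = a * c"
    using Pb unfolding colon_ideal_def loc_principal_def by blast
  have "b * ((s * d0) * q) = d0 * (s * (q * b))" by (simp add: algebra_simps)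
  also have "\<dots> = c * (s0 * (q0 * b))" using sc exact by (simp add: algebra_simps)
  also have "\<dots> = b * (q0 * (c * s0))" by (simp add: algebra_simps)
  finally have "(s * d0) * q = q0 * (c * s0)" using \<open>b \<noteq> 0\<close> by simp
  then show "q \<in> loc_principal P q0"
    unfolding loc_principal_def using prime_ideal_mult_notin[OF P s d0] by blast
qed (use q0 in simp)

lemma dedekind_local_uniformizer:
  fixes P :: "'a::idom set"
  assumes D: "dedekind_domain TYPE('a)" and P: "prime_ideal P" and "P \<noteq> {0}"
  shows "\<exists>p. local_uniformizer P p"
proof -
  have N: "noetherian TYPE('a)" and IC: "integrally_closed TYPE('a)"
    using D unfolding dedekind_domain_def by auto
  have I: "is_ideal P" using P by (rule prime_ideal_is_ideal)
  obtain a where a: "a \<in> P" "a \<noteq> 0" using \<open>P \<noteq> {0}\<close> ideal_zero[OF I] by blast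
  obtain b where b: "b \<notin> loc_principal P a" and colon: "colon_ideal (loc_principal P a) b = P"
    using dedekind_exists_maximal_colon_ideal[OF D P a] by blast
  have "b \<noteq> 0" using b ideal_zero[OF is_ideal_loc_principal[OF P]] by blast
  have Pb: "\<exists>s d. s \<notin> P \<and> s * (q * b) = a * d" if "q \<in> P" for q
    using that colon unfolding colon_ideal_def loc_principal_def by blast
  show ?thesis
  proof (cases "\<exists>q s d. q \<in> P \<and> s \<notin> P \<and> d \<notin> P \<and> s * (q * b) = a * d")
    case True
    then show ?thesis
      using local_uniformizer_if_exact_quotient[OF P a(2) \<open>b \<noteq> 0\<close>] colon by blast
  next
    case False
    let ?J = "colon_ideal ((*) a ` P) b"
    have "q \<in> colon_ideal ?J s" if "s * (q * b) = a * d" "d \<in> P" for q s d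
      using that by (auto simp: colon_ideal_def algebra_simps)
    then have gen: "\<forall>q\<in>P. \<exists>s. s \<notin> P \<and> q \<in> colon_ideal ?J s"
      using Pb False by metis
    obtain F where F: "finite F" "P = ideal_span F" using N I unfolding noetherian_def by blast
    then have "F \<subseteq> P" using ideal_span_superset by blast
    then obtain t where t: "t \<notin> P" "P \<subseteq> colon_ideal ?J t"
      using finitely_generated_subset_colon_ideal[OF P is_ideal_colon_ideal[OF is_ideal_image_mult[OF I]] F(1)]
        gen F(2) by blast
    then have "P \<subseteq> colon_ideal ((*) a ` P) (t * b)" by (auto simp: colon_ideal_def mult.assoc)
    then have "a dvd t * b" using dvd_if_colon_ideal_image_mult[OF N IC a] by blast
    then have "b \<in> loc_principal P a" unfolding loc_principal_def using t(1) by (auto elim: dvdE)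
    then show ?thesis using b by blast
  qed
qed

lemma complete_residue_system_obtain:
  "complete_residue_system P M \<Longrightarrow> \<exists>t\<in>#M. c - t \<in> P"
  unfolding complete_residue_system_def
  by (metis filter_mset_eq_mempty_iff one_neq_zero size_empty)

lemma complete_residue_system_unique:
  assumes "complete_residue_system P M" "s \<in># M" "t \<in># M" "c - s \<in> P" "c - t \<in> P"
  shows "s = t"
proof -
  obtain x where x: "filter_mset (\<lambda>r. c - r \<in> P) M = {#x#}"
    using assms(1) size_1_singleton_mset unfolding complete_residue_system_def by blast
  have "s \<in># filter_mset (\<lambda>r. c - r \<in> P) M" "t \<in># filter_mset (\<lambda>r. c - r \<in> P) M"
    using assms(2-5) by simp_all
  then show ?thesis unfolding x by simp
qed

lemma filter_mset_sum:
  "finite A \<Longrightarrow> filter_mset Q (\<Sum>i\<in>A. M i) = (\<Sum>i\<in>A. filter_mset Q (M i))"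
  by (induction A rule: finite_induct) auto

lemma prod_mset_image_sum:
  "finite A \<Longrightarrow> (\<Prod>x\<in>#(\<Sum>i\<in>A. M i). f x) = (\<Prod>i\<in>A. \<Prod>x\<in>#M i. f x)"
  by (induction A rule: finite_induct) auto

lemma prod_mset_if_eq_power:
  "(\<Prod>x\<in>#M. if Q x then p else 1) = p ^ size (filter_mset Q M)"
  by (induction M) auto

lemma fixed_divisor_subset_iff:
  assumes "is_ideal I"
  shows "fixed_divisor g \<subseteq> I \<longleftrightarrow> (\<forall>c. poly g c \<in> I)"
proof
  assume "fixed_divisor g \<subseteq> I"
  then show "\<forall>c. poly g c \<in> I"
    using ideal_span_superset[of "range (poly g)"] unfolding fixed_divisor_def by blast
next
  assume "\<forall>c. poly g c \<in> I"
  then show "fixed_divisor g \<subseteq> I"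
    unfolding fixed_divisor_def by (intro ideal_span_least[OF assms]) auto
qed

lemma fixed_divisor_subset_prime_iff:
  assumes "prime_ideal P"
  shows "fixed_divisor (\<Prod>r\<in>#T. [:-r, 1:]) \<subseteq> P \<longleftrightarrow> contains_residue_system P T"
proof -
  have "poly (\<Prod>r\<in>#T. [:-r, 1:]) c \<in> P \<longleftrightarrow> (\<exists>t\<in>#T. c - t \<in> P)" for c
    by (simp add: poly_prod_mset prime_ideal_prod_mset_iff[OF assms])
  then show ?thesis
    unfolding fixed_divisor_subset_iff[OF prime_ideal_is_ideal[OF assms]] contains_residue_system_def
    by blast
qed

lemma fixed_divisor_subset_ideal_pow:
  assumes P: "prime_ideal P" and A: "finite A"
    and CR: "\<forall>i\<in>A. complete_residue_system P (Ts i)"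
  shows "fixed_divisor (\<Prod>r\<in>#T0 + (\<Sum>i\<in>A. Ts i). [:-r, 1:]) \<subseteq> ideal_pow P (card A)"
  unfolding fixed_divisor_subset_iff[OF is_ideal_ideal_pow]
proof
  fix c
  have "(\<Prod>r\<in>#Ts i. c - r) \<in> P" if "i \<in> A" for i
    using complete_residue_system_obtain CR that prime_ideal_prod_mset_iff[OF P] by blast
  then have "(\<Prod>i\<in>A. \<Prod>r\<in>#Ts i. c - r) \<in> ideal_pow P (card A)"
    using prod_in_ideal_pow[OF A, of "\<lambda>i. \<Prod>r\<in>#Ts i. c - r"] by blast
  then have "(\<Prod>r\<in>#T0. c - r) * (\<Prod>i\<in>A. \<Prod>r\<in>#Ts i. c - r) \<in> ideal_pow P (card A)"
    by (rule ideal_mult_left[OF is_ideal_ideal_pow])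
  then show "poly (\<Prod>r\<in>#T0 + (\<Sum>i\<in>A. Ts i). [:-r, 1:]) c \<in> ideal_pow P (card A)"
    by (simp add: poly_prod_mset poly_prod prod_mset_image_sum[OF A])
qed

lemma exists_point_exact_residues:
  assumes P: "prime_ideal P" and p: "local_uniformizer P p"
    and CR: "\<forall>i\<in>A. complete_residue_system P (Ts i)"
    and SQ: "\<forall>i\<in>A. \<forall>j\<in>A. \<forall>s t. i \<noteq> j \<and> s \<in># Ts i \<and> t \<in># Ts j \<and> s - t \<in> P
            \<longrightarrow> s - t \<in> ideal_pow P 2"
    and z: "\<forall>s. s \<in># T0 \<longrightarrow> s - z \<notin> P"
  shows "\<exists>w. (\<forall>s\<in>#T0. w - s \<notin> P) \<and> (\<forall>i\<in>A. \<forall>r\<in>#Ts i. w - r \<in> P \<longrightarrow> loc_assoc P (w - r) p)"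
proof (cases "A = {}")
  case True
  have "z - s \<notin> P" if "s \<in># T0" for s
    using z that ideal_diff_swap[OF prime_ideal_is_ideal[OF P], of z s] by blast
  then show ?thesis using True by blast
next
  case False
  have I: "is_ideal P" using P by (rule prime_ideal_is_ideal)
  have pP: "p \<in> P" using p unfolding local_uniformizer_def by blast
  obtain i0 where i0: "i0 \<in> A" using False by blast
  then obtain t where t: "t \<in># Ts i0" "z - t \<in> P" using CR complete_residue_system_obtain by blast
  have "t + p - s \<notin> P" if "s \<in># T0" for s
  proof
    assume "t + p - s \<in> P"
    then have "(t + p - s) - p - (t - z) \<in> P"
      using ideal_diff[OF I] pP ideal_diff_swap[OF I t(2)] by blast
    then have "z - s \<in> P" by (simp add: algebra_simps)
    then have "s - z \<in> P" by (rule ideal_diff_swap[OF I])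
    then show False using z that by blast
  qed
  moreover have "loc_assoc P (t + p - r) p" if i: "i \<in> A" and r: "r \<in># Ts i" "t + p - r \<in> P" for i r
  proof -
    have tr: "t - r \<in> P" using ideal_diff[OF I r(2) pP] by (simp add: algebra_simps)
    have "t - r \<in> ideal_pow P 2"
    proof (cases "i = i0")
      case True
      have "t - t \<in> P" using ideal_zero[OF I] by simp
      then have "r = t" using complete_residue_system_unique[OF CR[rule_format, OF i0] _ t(1) tr] r True
        by blast
      then show ?thesis using ideal_zero[OF is_ideal_ideal_pow] by simp
    next
      case False
      then show ?thesis using SQ[rule_format, OF i0 i, of t r] t(1) r(1) tr by auto
    qed
    then have "loc_assoc P (p + (t - r)) p" by (rule loc_assoc_uniformizer_add[OF P p])
    moreover have "p + (t - r) = t + p - r" by (simp add: algebra_simps)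
    ultimately show ?thesis by simp
  qed
  ultimately show ?thesis by blast
qed

lemma loc_assoc_prod_exact_residues:
  assumes P: "prime_ideal P" and A: "finite A"
    and CR: "\<forall>i\<in>A. complete_residue_system P (Ts i)"
    and T0: "\<forall>s\<in>#T0. w - s \<notin> P"
    and Ts: "\<forall>i\<in>A. \<forall>r\<in>#Ts i. w - r \<in> P \<longrightarrow> loc_assoc P (w - r) p"
  shows "loc_assoc P (\<Prod>r\<in>#T0 + (\<Sum>i\<in>A. Ts i). w - r) (p ^ card A)"
proof -
  let ?T = "T0 + (\<Sum>i\<in>A. Ts i)" and ?Q = "\<lambda>r. w - r \<in> P"
  have "loc_assoc P (w - r) (if ?Q r then p else 1)" if r: "r \<in># ?T" for r
  proof (cases "?Q r")
    case True
    then have "r \<notin># T0" using T0 by blast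
    then have "r \<in> set_mset (\<Sum>i\<in>A. Ts i)" using r by simp
    then obtain i where "i \<in> A" "r \<in># Ts i" unfolding set_mset_sum[OF A] by blast
    then have "loc_assoc P (w - r) p" using Ts True by blast
    then show ?thesis using True by simp
  next
    case False
    then show ?thesis using loc_assoc_one[OF P] by simp
  qed
  then have "loc_assoc P (\<Prod>r\<in>#?T. w - r) (\<Prod>r\<in>#?T. if ?Q r then p else 1)"
    by (rule loc_assoc_prod_mset[OF P, rule_format])
  moreover have "filter_mset ?Q T0 = {#}"
    using T0 by (simp add: filter_mset_eq_mempty_iff)
  moreover have "size (filter_mset ?Q (\<Sum>i\<in>A. Ts i)) = card A"
  proof -
    have "size (filter_mset ?Q (Ts i)) = 1" if "i \<in> A" for i
      using CR that unfolding complete_residue_system_def by blast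
    then show ?thesis by (simp add: filter_mset_sum[OF A] size_multiset_sum)
  qed
  ultimately show ?thesis by (simp add: prod_mset_if_eq_power)
qed

lemma ideal_val_fixed_divisor_exact_residues:
  fixes T0 :: "'a::idom multiset"
  assumes D: "dedekind_domain TYPE('a)" and P: "prime_ideal P" "P \<noteq> {0}" and A: "finite A"
    and CR: "\<forall>i\<in>A. complete_residue_system P (Ts i)"
    and SQ: "\<forall>i\<in>A. \<forall>j\<in>A. \<forall>s t. i \<noteq> j \<and> s \<in># Ts i \<and> t \<in># Ts j \<and> s - t \<in> P
            \<longrightarrow> s - t \<in> ideal_pow P 2"
    and z: "\<forall>s. s \<in># T0 \<longrightarrow> s - z \<notin> P"
  shows "ideal_val P (fixed_divisor (\<Prod>r\<in>#T0 + (\<Sum>i\<in>A. Ts i). [:-r, 1:])) = card A"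
proof -
  define f where "f = (\<Prod>r\<in>#T0 + (\<Sum>i\<in>A. Ts i). [:-r, 1:])"
  have N: "noetherian TYPE('a)" using D unfolding dedekind_domain_def by blast
  obtain p where p: "local_uniformizer P p" using dedekind_local_uniformizer[OF D P] by blast
  have sub: "fixed_divisor f \<subseteq> ideal_pow P (card A)"
    unfolding f_def using fixed_divisor_subset_ideal_pow[OF P(1) A CR] .
  obtain w where "\<forall>s\<in>#T0. w - s \<notin> P" "\<forall>i\<in>A. \<forall>r\<in>#Ts i. w - r \<in> P \<longrightarrow> loc_assoc P (w - r) p"
    using exists_point_exact_residues[OF P(1) p CR SQ z] by blast
  then have "loc_assoc P (poly f w) (p ^ card A)"
    using loc_assoc_prod_exact_residues[OF P(1) A CR] by (simp add: f_def poly_prod_mset)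
  then have not_in: "poly f w \<notin> ideal_pow P (Suc (card A))"
    by (rule loc_assoc_power_not_in_ideal_pow[OF P(1) p])
  have w: "poly f w \<in> fixed_divisor f" unfolding fixed_divisor_def using ideal_span_superset by blast
  moreover have "poly f w \<noteq> 0"
    using not_in ideal_zero[OF is_ideal_ideal_pow[of P "Suc (card A)"]] by (auto simp del: ideal_pow.simps)
  moreover have "elem_val P (poly f w) = card A"
    using elem_val_eqI[OF prime_ideal_is_ideal[OF P(1)] _ not_in] w sub by blast
  ultimately show ?thesis unfolding f_def[symmetric] by (rule ideal_val_eqI[OF N P(1) p sub])
qed

theorem lemma3p2:
  fixes T :: "'a::idom multiset" and Q :: "'a set"
  assumes "prime_ideal Q" and "Q \<noteq> {0}"
  shows "(fixed_divisor (\<Prod>r\<in>#T. [:-r, 1:]) \<subseteq> Q \<longleftrightarrow> contains_residue_system Q T) \<and>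
    (\<forall>(T0 :: 'a multiset) (Ts :: nat \<Rightarrow> 'a multiset) (e :: nat).
       dedekind_domain TYPE('a) \<and>
       T = T0 + (\<Sum>i\<in>{1..e}. Ts i) \<and>
       (\<forall>i\<in>{1..e}. complete_residue_system Q (Ts i)) \<and>
       (\<forall>i\<in>{1..e}. \<forall>j\<in>{1..e}. \<forall>s t. i \<noteq> j \<and> s \<in># Ts i \<and> t \<in># Ts j \<and> s - t \<in> Q
            \<longrightarrow> s - t \<in> ideal_pow Q 2) \<and>
       (\<exists>z. \<forall>s. s \<in># T0 \<longrightarrow> s - z \<notin> Q)
     \<longrightarrow> ideal_val Q (fixed_divisor (\<Prod>r\<in>#T. [:-r, 1:])) = e)"
proof (intro conjI allI impI)
  show "fixed_divisor (\<Prod>r\<in>#T. [:-r, 1:]) \<subseteq> Q \<longleftrightarrow> contains_residue_system Q T"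
    using assms(1) by (rule fixed_divisor_subset_prime_iff)
next
  fix T0 :: "'a multiset" and Ts :: "nat \<Rightarrow> 'a multiset" and e :: nat
  assume H: "dedekind_domain TYPE('a) \<and> T = T0 + (\<Sum>i\<in>{1..e}. Ts i) \<and>
       (\<forall>i\<in>{1..e}. complete_residue_system Q (Ts i)) \<and>
       (\<forall>i\<in>{1..e}. \<forall>j\<in>{1..e}. \<forall>s t. i \<noteq> j \<and> s \<in># Ts i \<and> t \<in># Ts j \<and> s - t \<in> Q
            \<longrightarrow> s - t \<in> ideal_pow Q 2) \<and>
       (\<exists>z. \<forall>s. s \<in># T0 \<longrightarrow> s - z \<notin> Q)"
  then obtain z where "\<forall>s. s \<in># T0 \<longrightarrow> s - z \<notin> Q" by blast
  with H have "ideal_val Q (fixed_divisor (\<Prod>r\<in>#T. [:-r, 1:])) = card {1..e}"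
    using ideal_val_fixed_divisor_exact_residues[OF _ assms, of "{1..e}" Ts T0 z] by auto
  then show "ideal_val Q (fixed_divisor (\<Prod>r\<in>#T. [:-r, 1:])) = e" by simp
qed

end
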